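(* For all integers $n,h,b\ge0$, $E_n(h,b)=F_n(h,b)$, where $E_n(h,b)=|\mathcal{B}^{(h,b)}_{n+1}(213)|$ and $F_n(h,b)=|\mathcal{G}(n;h,b)|$.
   Context: For integers $h,b\ge0$, a permutation $\pi\in\mathfrak{S}_{n+1}$ is an $(h,b)$-ballot permutation if the lattice path starting at $(0,h)$ whose $i$th step ($i\in[n]$) is $(1,1)$ if $\pi_i<\pi_{i+1}$ and $(1,-1)$ if $\pi_i>\pi_{i+1}$ ends at $(n,b)$ and never goes below the $x$-axis. $\mathcal{B}^{(h,b)}_{n+1}(213)$ is the set of $(h,b)$-ballot permutations in $\mathfrak{S}_{n+1}$ with no subsequence order-isomorphic to $213$. A Gessel walk is a lattice path confined to $\mathbb{N}^2$ with steps from $\{(0,1),(0,-1),(1,1),(-1,-1)\}$; $\mathcal{G}(n;h,b)$ is the set of $n$-step Gessel walks from $(0,h)$ to $(0,b)$. *)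

theory Defs
  imports Main
begin

definition is_perm :: "nat \<Rightarrow> nat list \<Rightarrow> bool" where
  "is_perm m p \<longleftrightarrow> distinct p \<and> set p = {1..m}"

definition avoids_213 :: "nat list \<Rightarrow> bool" where
  "avoids_213 p \<longleftrightarrow> \<not> (\<exists>i j k. i < j \<and> j < k \<and> k < length p \<and>
                                p ! j < p ! i \<and> p ! i < p ! k)"

definition ballot_height :: "nat \<Rightarrow> nat list \<Rightarrow> nat \<Rightarrow> int" where
  "ballot_height h p k = int h + (\<Sum>i<k. if p ! i < p ! Suc i then 1 else -1)"

definition ballot_perm :: "nat \<Rightarrow> nat \<Rightarrow> nat \<Rightarrow> nat list \<Rightarrow> bool" where
  "ballot_perm n h b p \<longleftrightarrow> is_perm (n + 1) p \<and>
     (\<forall>k\<le>n. ballot_height h p k \<ge> 0) \<and> ballot_height h p n = int b"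

definition ballot_213 :: "nat \<Rightarrow> nat \<Rightarrow> nat \<Rightarrow> nat list set" where
  "ballot_213 n h b = {p. ballot_perm n h b p \<and> avoids_213 p}"

definition gessel_steps :: "(int \<times> int) set" where
  "gessel_steps = {(0, 1), (0, -1), (1, 1), (-1, -1)}"

definition walk_pos :: "nat \<Rightarrow> (int \<times> int) list \<Rightarrow> nat \<Rightarrow> int \<times> int" where
  "walk_pos h w k = (sum_list (map fst (take k w)), int h + sum_list (map snd (take k w)))"

definition gessel_walks :: "nat \<Rightarrow> nat \<Rightarrow> nat \<Rightarrow> (int \<times> int) list set" where
  "gessel_walks n h b = {w. length w = n \<and> set w \<subseteq> gessel_steps \<and>
     (\<forall>k\<le>n. fst (walk_pos h w k) \<ge> 0 \<and> snd (walk_pos h w k) \<ge> 0) \<and>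
     walk_pos h w n = (0, int b)}"

end

theory Submission
  imports Defs
begin

text \<open>Appending a value v to a permutation (and raising the entries that are at least v) creates
  no 213 pattern exactly when the old permutation avoids 213 and v is at most its last entry plus
  one; removing the last entry and standardizing undoes this. Hence the number a_n(y, j) of
  213-avoiding ballot permutations of [n+1] ending at height y with last entry j + 1 satisfies
  a_(n+1)(y, j) = a_n(y - 1, j - 1) + (sum over i >= j of a_n(y + 1, i)), the first term being the
  case of a final ascent. Gessel walks ending at (x, y) satisfy the recurrence given by their last
  step, and Pascal's rule shows that the sum over j of (j choose x) * a_n(y, j) satisfies the same
  recurrence. So it counts the walks ending at (x, y), and x = 0 gives the theorem.\<close>

definition shift_from :: "nat \<Rightarrow> nat \<Rightarrow> nat" where
  "shift_from v x = (if v \<le> x then Suc x else x)"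

definition extend_perm :: "nat \<Rightarrow> nat list \<Rightarrow> nat list" where
  "extend_perm v p = map (shift_from v) p @ [v]"

definition shrink_perm :: "nat list \<Rightarrow> nat list" where
  "shrink_perm p = map (\<lambda>x. if last p < x then x - 1 else x) (butlast p)"

lemma shift_from_less_iff [simp]: "shift_from v a < shift_from v b \<longleftrightarrow> a < b"
  by (auto simp: shift_from_def)

lemma shift_from_less_self_iff [simp]: "shift_from v x < v \<longleftrightarrow> x < v"
  by (auto simp: shift_from_def)

lemma shift_from_neq_self [simp]: "shift_from v x \<noteq> v"
  by (auto simp: shift_from_def)

lemma inj_shift_from: "inj (shift_from v)"
  by (auto simp: inj_def shift_from_def split: if_splits)

lemma image_shift_from_atLeastAtMost:
  assumes "1 \<le> v" "v \<le> Suc m"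
  shows "shift_from v ` {1..m} = {1..Suc m} - {v}"
proof
  show "shift_from v ` {1..m} \<subseteq> {1..Suc m} - {v}"
    by (auto simp: shift_from_def)
  show "{1..Suc m} - {v} \<subseteq> shift_from v ` {1..m}"
  proof
    fix x assume x: "x \<in> {1..Suc m} - {v}"
    show "x \<in> shift_from v ` {1..m}"
    proof (cases "x < v")
      case True
      then show ?thesis using x assms by (auto simp: shift_from_def image_iff intro!: bexI[of _ x])
    next
      case False
      then show ?thesis using x assms by (auto simp: shift_from_def image_iff intro!: bexI[of _ "x - 1"])
    qed
  qed
qed

lemma inj_extend_perm: "inj (extend_perm v)"
  using inj_shift_from by (auto simp: inj_def extend_perm_def inj_map_eq_map)

lemma length_extend_perm [simp]: "length (extend_perm v p) = Suc (length p)"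
  by (simp add: extend_perm_def)

lemma nth_extend_perm: "i < length p \<Longrightarrow> extend_perm v p ! i = shift_from v (p ! i)"
  by (simp add: extend_perm_def nth_append)

lemma nth_extend_perm_length [simp]: "extend_perm v p ! length p = v"
  by (simp add: extend_perm_def nth_append)

lemma last_extend_perm [simp]: "last (extend_perm v p) = v"
  by (simp add: extend_perm_def)

lemma shrink_extend_perm [simp]: "shrink_perm (extend_perm v p) = p"
  by (auto simp: shrink_perm_def extend_perm_def shift_from_def intro!: map_idI)

lemma extend_shrink_perm:
  assumes "distinct p" "p \<noteq> []"
  shows "extend_perm (last p) (shrink_perm p) = p"
proof -
  have "last p \<notin> set (butlast p)"
    using assms by (metis append_butlast_last_id distinct_append not_distinct_conv_prefix)
  then have "map (shift_from (last p)) (shrink_perm p) = butlast p"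
    unfolding shrink_perm_def map_map by (intro map_idI) (auto simp: shift_from_def)
  then show ?thesis
    using assms by (simp add: extend_perm_def)
qed

lemma length_is_perm: "is_perm m p \<Longrightarrow> length p = m"
  unfolding is_perm_def using distinct_card by fastforce

lemma last_is_perm: "is_perm (Suc m) p \<Longrightarrow> last p \<in> {1..Suc m}"
  by (metis is_perm_def last_in_set length_is_perm length_0_conv nat.distinct(1))

lemma is_perm_extend_perm:
  assumes "is_perm m p" "1 \<le> v" "v \<le> Suc m"
  shows "is_perm (Suc m) (extend_perm v p)"
proof -
  have "distinct (map (shift_from v) p)"
    using assms(1) inj_shift_from[of v] by (simp add: is_perm_def distinct_map inj_on_def inj_def)
  moreover have "set (map (shift_from v) p) = {1..Suc m} - {v}"
    using assms image_shift_from_atLeastAtMost by (simp add: is_perm_def)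
  ultimately show ?thesis
    using assms unfolding is_perm_def extend_perm_def by auto
qed

lemma is_perm_shrink_perm:
  assumes "is_perm (Suc m) p"
  shows "is_perm m (shrink_perm p)"
proof -
  have "p \<noteq> []" using assms by (auto simp: is_perm_def)
  define v q where "v = last p" and "q = shrink_perm p"
  have v: "1 \<le> v" "v \<le> Suc m" using last_is_perm[OF assms] by (auto simp: v_def)
  have p: "p = map (shift_from v) q @ [v]"
    using extend_shrink_perm[of p] assms \<open>p \<noteq> []\<close> by (simp add: is_perm_def extend_perm_def v_def q_def)
  then have "distinct (map (shift_from v) q)" "v \<notin> shift_from v ` set q"
    using assms by (auto simp: is_perm_def)
  then have "distinct q" by (simp add: distinct_map)
  have "shift_from v ` set q = {1..Suc m} - {v}"
    using assms \<open>v \<notin> shift_from v ` set q\<close> by (subst (asm) p) (auto simp: is_perm_def)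
  also have "\<dots> = shift_from v ` {1..m}"
    using image_shift_from_atLeastAtMost[OF v] by simp
  finally have "set q = {1..m}"
    using inj_image_eq_iff[OF inj_shift_from] by blast
  with \<open>distinct q\<close> show ?thesis
    by (simp add: is_perm_def q_def)
qed

lemma avoids_213_extend_perm_imp_avoids_213:
  assumes "avoids_213 (extend_perm v p)"
  shows "avoids_213 p"
  unfolding avoids_213_def
proof
  assume "\<exists>i j k. i < j \<and> j < k \<and> k < length p \<and> p ! j < p ! i \<and> p ! i < p ! k"
  then obtain i j k where ijk: "i < j" "j < k" "k < length p" "p ! j < p ! i" "p ! i < p ! k"
    by blast
  then have "extend_perm v p ! j < extend_perm v p ! i" "extend_perm v p ! i < extend_perm v p ! k"
    by (simp_all add: nth_extend_perm)
  with assms ijk show False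
    unfolding avoids_213_def by (metis length_extend_perm less_SucI)
qed

text \<open>If v exceeded last p + 1, the entry last p + 1, the last entry and v would form a 213.\<close>
lemma avoids_213_extend_perm_imp_le:
  assumes "is_perm m p" "p \<noteq> []" "v \<le> Suc m" "avoids_213 (extend_perm v p)"
  shows "v \<le> Suc (last p)"
proof (rule ccontr)
  assume "\<not> v \<le> Suc (last p)"
  then have v: "Suc (Suc (last p)) \<le> v" by simp
  define L where "L = length p - 1"
  have L: "last p = p ! L" "Suc L = length p"
    using assms(2) by (auto simp: L_def last_conv_nth)
  have "Suc (last p) \<in> set p"
    using assms(1,3) v length_is_perm[OF assms(1)] by (auto simp: is_perm_def)
  then obtain i where i: "i < length p" "p ! i = Suc (last p)"
    by (auto simp: in_set_conv_nth)
  then have "i < L" using L by (metis less_Suc_eq n_not_Suc_n)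
  moreover have "extend_perm v p ! i = Suc (last p)"
    using i v by (simp add: nth_extend_perm shift_from_def)
  moreover have "extend_perm v p ! L = last p"
    using L v by (simp add: nth_extend_perm shift_from_def)
  moreover have "extend_perm v p ! Suc L = v"
    using L by simp
  ultimately show False
    using assms(4) v L unfolding avoids_213_def by (metis Suc_le_lessD length_extend_perm lessI)
qed

lemma avoids_213_extend_permI:
  assumes "distinct p" "p \<noteq> []" "avoids_213 p" "v \<le> Suc (last p)"
  shows "avoids_213 (extend_perm v p)"
  unfolding avoids_213_def
proof
  define q where "q = extend_perm v p"
  assume "\<exists>i j k. i < j \<and> j < k \<and> k < length q \<and> q ! j < q ! i \<and> q ! i < q ! k"
  then obtain i j k where ijk: "i < j" "j < k" "k < length q" "q ! j < q ! i" "q ! i < q ! k"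
    by blast
  show False
  proof (cases "k < length p")
    case True
    then have "p ! j < p ! i" "p ! i < p ! k"
      using ijk by (simp_all add: q_def nth_extend_perm)
    with assms(3) ijk True show False
      unfolding avoids_213_def by blast
  next
    case False
    define L where "L = length p - 1"
    have L: "last p = p ! L" "Suc L = length p"
      using assms(2) by (auto simp: L_def last_conv_nth)
    have k: "k = length p" and ij: "i < length p" "j < length p"
      using False ijk by (auto simp: q_def)
    have pji: "p ! j < p ! i"
      using ijk ij by (simp add: q_def nth_extend_perm)
    have "p ! i < v"
      using ijk ij k by (simp add: q_def nth_extend_perm)
    moreover have "p ! i \<noteq> last p"
      using L ij ijk assms(1) by (metis nth_eq_iff_index_eq less_irrefl order.strict_trans less_Suc_eq_le not_le)
    ultimately have "p ! i < last p"
      using assms(4) by simp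
    moreover have "j \<noteq> L"
      using pji L \<open>p ! i < last p\<close> by auto
    ultimately show False
      using assms(3) pji ij ijk L unfolding avoids_213_def by (metis less_Suc_eq)
  qed
qed

lemma avoids_213_extend_perm_iff:
  assumes "is_perm m p" "p \<noteq> []" "v \<le> Suc m"
  shows "avoids_213 (extend_perm v p) \<longleftrightarrow> avoids_213 p \<and> v \<le> Suc (last p)"
  using assms avoids_213_extend_perm_imp_avoids_213 avoids_213_extend_perm_imp_le[OF assms]
    avoids_213_extend_permI[of p v] by (auto simp: is_perm_def)

lemma ballot_height_Suc:
  "ballot_height h p (Suc k) = ballot_height h p k + (if p ! k < p ! Suc k then 1 else -1)"
  by (simp add: ballot_height_def)

lemma ballot_height_extend_perm:
  assumes "k < length p"
  shows "ballot_height h (extend_perm v p) k = ballot_height h p k"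
  unfolding ballot_height_def using assms
  by (intro arg_cong[where f="\<lambda>x. int h + x"] sum.cong) (auto simp: nth_extend_perm)

lemma ballot_height_extend_perm_length:
  assumes "length p = Suc m"
  shows "ballot_height h (extend_perm v p) (Suc m)
           = ballot_height h p m + (if last p < v then 1 else -1)"
proof -
  have "last p = p ! m"
    using assms by (cases p rule: rev_cases) (auto simp: nth_append)
  then show ?thesis
    using assms nth_extend_perm_length[of v p]
    by (simp add: ballot_height_Suc ballot_height_extend_perm nth_extend_perm)
qed

definition ballot_213_end :: "nat \<Rightarrow> nat \<Rightarrow> int \<Rightarrow> nat \<Rightarrow> nat list set" where
  "ballot_213_end h n y j = {p. is_perm (Suc n) p \<and> avoids_213 p \<and>
     (\<forall>k\<le>n. ballot_height h p k \<ge> 0) \<and> ballot_height h p n = y \<and> last p = Suc j}"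

lemma finite_is_perm: "finite {p. is_perm m p}"
proof (rule finite_subset)
  show "{p. is_perm m p} \<subseteq> {xs. set xs \<subseteq> {1..m} \<and> length xs = m}"
    using length_is_perm by (auto simp: is_perm_def)
  show "finite {xs. set xs \<subseteq> {1..m} \<and> length xs = m}"
    by (rule finite_lists_length_eq) simp
qed

lemma ballot_213_end_unique:
  "p \<in> ballot_213_end h n y j \<Longrightarrow> p \<in> ballot_213_end h n y' j' \<Longrightarrow> y = y' \<and> j = j'"
  by (auto simp: ballot_213_end_def)

lemma finite_ballot_213_end: "finite (ballot_213_end h n y j)"
  by (rule finite_subset[OF _ finite_is_perm[of "Suc n"]]) (auto simp: ballot_213_end_def)

lemma card_UN_ballot_213_end:
  "finite I \<Longrightarrow> card (\<Union>j\<in>I. ballot_213_end h n y j) = (\<Sum>j\<in>I. card (ballot_213_end h n y j))"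
  by (rule card_UN_disjoint) (auto simp: finite_ballot_213_end dest: ballot_213_end_unique)

lemma ballot_213_end_neg: "y < 0 \<Longrightarrow> ballot_213_end h n y j = {}"
  by (auto simp: ballot_213_end_def)

lemma is_perm_Suc_0_iff: "is_perm (Suc 0) p \<longleftrightarrow> p = [Suc 0]"
proof
  assume p: "is_perm (Suc 0) p"
  then obtain x where "p = [x]"
    using length_is_perm[OF p] by (cases p) auto
  with p show "p = [Suc 0]"
    by (auto simp: is_perm_def)
qed (auto simp: is_perm_def)

lemma card_ballot_213_end_0: "card (ballot_213_end h 0 y j) = (if y = int h \<and> j = 0 then 1 else 0)"
proof -
  have "ballot_213_end h 0 y j = (if y = int h \<and> j = 0 then {[1]} else {})"
    by (auto simp: ballot_213_end_def is_perm_Suc_0_iff avoids_213_def ballot_height_def)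
  then show ?thesis by simp
qed

lemma card_ballot_213_eq_sum: "card (ballot_213 n h b) = (\<Sum>j\<le>n. card (ballot_213_end h n (int b) j))"
proof -
  have "ballot_213 n h b = (\<Union>j\<le>n. ballot_213_end h n (int b) j)"
  proof (intro set_eqI iffI)
    fix p assume p: "p \<in> ballot_213 n h b"
    then have "last p \<in> {1..Suc n}"
      by (intro last_is_perm) (simp add: ballot_213_def ballot_perm_def)
    then have "last p = Suc (last p - 1)" "last p - 1 \<le> n" by auto
    with p show "p \<in> (\<Union>j\<le>n. ballot_213_end h n (int b) j)"
      by (auto simp: ballot_213_def ballot_perm_def ballot_213_end_def)
  qed (auto simp: ballot_213_def ballot_perm_def ballot_213_end_def)
  then show ?thesis
    by (simp add: card_UN_ballot_213_end)
qed

lemma extend_perm_mem_ballot_213_end_iff: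
  assumes "is_perm (Suc n) p" "j \<le> Suc n" "0 \<le> y"
  shows "extend_perm (Suc j) p \<in> ballot_213_end h (Suc n) y j \<longleftrightarrow>
    avoids_213 p \<and> (\<forall>k\<le>n. ballot_height h p k \<ge> 0) \<and> j \<le> last p \<and>
    ballot_height h p n + (if last p \<le> j then 1 else -1) = y"
proof -
  have len: "length p = Suc n" using length_is_perm[OF assms(1)] .
  then have "p \<noteq> []" by auto
  have "is_perm (Suc (Suc n)) (extend_perm (Suc j) p)"
    using is_perm_extend_perm[OF assms(1)] assms(2) by simp
  moreover have "avoids_213 (extend_perm (Suc j) p) \<longleftrightarrow> avoids_213 p \<and> j \<le> last p"
    using avoids_213_extend_perm_iff[OF assms(1) \<open>p \<noteq> []\<close>, of "Suc j"] assms(2) len by auto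
  moreover have "ballot_height h (extend_perm (Suc j) p) (Suc n)
                   = ballot_height h p n + (if last p \<le> j then 1 else -1)"
    using ballot_height_extend_perm_length[OF len] by (simp add: less_Suc_eq_le)
  moreover have "(\<forall>k\<le>Suc n. ballot_height h (extend_perm (Suc j) p) k \<ge> 0) \<longleftrightarrow>
      (\<forall>k\<le>n. ballot_height h p k \<ge> 0) \<and> ballot_height h (extend_perm (Suc j) p) (Suc n) \<ge> 0"
    using len by (auto simp: ballot_height_extend_perm le_Suc_eq)
  ultimately show ?thesis
    using assms(3) by (auto simp: ballot_213_end_def)
qed

lemma ballot_213_end_Suc:
  assumes "j \<le> Suc n" "0 \<le> y"
  shows "ballot_213_end h (Suc n) y j = extend_perm (Suc j) `
    ((if j = 0 then {} else ballot_213_end h n (y - 1) (j - 1)) \<union>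
     (\<Union>i\<in>{j..n}. ballot_213_end h n (y + 1) i))" (is "_ = _ ` ?S")
proof -
  have iff: "extend_perm (Suc j) p \<in> ballot_213_end h (Suc n) y j \<longleftrightarrow> p \<in> ?S"
    if p: "is_perm (Suc n) p" for p
  proof -
    have "last p \<in> {1..Suc n}" using last_is_perm[OF p] .
    then show ?thesis
      unfolding extend_perm_mem_ballot_213_end_iff[OF p assms]
      using p by (cases "last p \<le> j") (auto simp: ballot_213_end_def intro!: bexI[of _ "last p - 1"])
  qed
  show ?thesis
  proof (intro set_eqI iffI)
    fix p' assume p': "p' \<in> ballot_213_end h (Suc n) y j"
    then have "is_perm (Suc (Suc n)) p'" "last p' = Suc j"
      by (simp_all add: ballot_213_end_def)
    moreover have "p' \<noteq> []"
      using p' by (auto simp: ballot_213_end_def is_perm_def)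
    ultimately have "p' = extend_perm (Suc j) (shrink_perm p')" "is_perm (Suc n) (shrink_perm p')"
      using extend_shrink_perm[of p'] is_perm_shrink_perm by (auto simp: is_perm_def)
    with p' iff show "p' \<in> extend_perm (Suc j) ` ?S"
      by (metis image_eqI)
  next
    fix p' assume "p' \<in> extend_perm (Suc j) ` ?S"
    then obtain p where "p \<in> ?S" "p' = extend_perm (Suc j) p" by blast
    moreover have "is_perm (Suc n) p"
      using \<open>p \<in> ?S\<close> by (auto simp: ballot_213_end_def split: if_splits)
    ultimately show "p' \<in> ballot_213_end h (Suc n) y j"
      using iff by blast
  qed
qed

lemma card_ballot_213_end_Suc:
  assumes "j \<le> Suc n" "0 \<le> y"
  shows "card (ballot_213_end h (Suc n) y j)
           = (if j = 0 then 0 else card (ballot_213_end h n (y - 1) (j - 1)))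
             + (\<Sum>i\<in>{j..n}. card (ballot_213_end h n (y + 1) i))"
  unfolding ballot_213_end_Suc[OF assms]
    by (subst card_image[OF inj_on_subset[OF inj_extend_perm subset_UNIV]],
        subst card_Un_disjoint)
      (auto simp: finite_ballot_213_end card_UN_ballot_213_end dest: ballot_213_end_unique)

definition gessel_walks_to :: "nat \<Rightarrow> nat \<Rightarrow> int \<Rightarrow> int \<Rightarrow> (int \<times> int) list set" where
  "gessel_walks_to h n x y = {w. length w = n \<and> set w \<subseteq> gessel_steps \<and>
     (\<forall>k\<le>n. fst (walk_pos h w k) \<ge> 0 \<and> snd (walk_pos h w k) \<ge> 0) \<and> walk_pos h w n = (x, y)}"

lemma gessel_walks_eq: "gessel_walks n h b = gessel_walks_to h n 0 (int b)"
  by (simp add: gessel_walks_def gessel_walks_to_def)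

lemma finite_gessel_walks_to: "finite (gessel_walks_to h n x y)"
proof (rule finite_subset)
  show "gessel_walks_to h n x y \<subseteq> {w. set w \<subseteq> gessel_steps \<and> length w = n}"
    by (auto simp: gessel_walks_to_def)
  show "finite {w. set w \<subseteq> gessel_steps \<and> length w = n}"
    by (rule finite_lists_length_eq) (simp add: gessel_steps_def)
qed

lemma gessel_walks_to_neg: "x < 0 \<or> y < 0 \<Longrightarrow> gessel_walks_to h n x y = {}"
  by (auto simp: gessel_walks_to_def)

lemma card_gessel_walks_to_0:
  "card (gessel_walks_to h 0 x y) = (if x = 0 \<and> y = int h then 1 else 0)"
proof -
  have "gessel_walks_to h 0 x y = (if x = 0 \<and> y = int h then {[]} else {})"
    by (auto simp: gessel_walks_to_def walk_pos_def)
  then show ?thesis by simp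
qed

lemma walk_pos_snoc: "k \<le> length w \<Longrightarrow> walk_pos h (w @ [s]) k = walk_pos h w k"
  by (simp add: walk_pos_def)

lemma walk_pos_snoc_length:
  "walk_pos h (w @ [s]) (Suc (length w)) =
     (fst (walk_pos h w (length w)) + fst s, snd (walk_pos h w (length w)) + snd s)"
  by (simp add: walk_pos_def)

lemma snoc_mem_gessel_walks_to_iff:
  assumes "0 \<le> x" "0 \<le> y"
  shows "w @ [s] \<in> gessel_walks_to h (Suc n) x y \<longleftrightarrow>
           s \<in> gessel_steps \<and> w \<in> gessel_walks_to h n (x - fst s) (y - snd s)"
proof (cases "length w = n")
  case True
  let ?ok = "\<lambda>p :: int \<times> int. fst p \<ge> 0 \<and> snd p \<ge> 0"
  have "walk_pos h (w @ [s]) (Suc n) = (x, y) \<longleftrightarrow> walk_pos h w n = (x - fst s, y - snd s)"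
    using walk_pos_snoc_length[of h w s] True by (cases "walk_pos h w n") auto
  moreover have "(\<forall>k\<le>Suc n. ?ok (walk_pos h (w @ [s]) k)) \<longleftrightarrow>
      (\<forall>k\<le>n. ?ok (walk_pos h w k)) \<and> ?ok (walk_pos h (w @ [s]) (Suc n))"
    using True walk_pos_snoc[of _ w h s] le_Suc_eq by (metis (no_types, lifting))
  ultimately show ?thesis
    using True assms unfolding gessel_walks_to_def by auto
qed (auto simp: gessel_walks_to_def)

lemma gessel_walks_to_Suc:
  assumes "0 \<le> x" "0 \<le> y"
  shows "gessel_walks_to h (Suc n) x y =
           (\<Union>s\<in>gessel_steps. (\<lambda>w. w @ [s]) ` gessel_walks_to h n (x - fst s) (y - snd s))"
proof (intro set_eqI iffI)
  fix w' assume w': "w' \<in> gessel_walks_to h (Suc n) x y"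
  then have "w' = butlast w' @ [last w']"
    by (intro append_butlast_last_id[symmetric]) (auto simp: gessel_walks_to_def)
  moreover have "last w' \<in> gessel_steps"
    and "butlast w' \<in> gessel_walks_to h n (x - fst (last w')) (y - snd (last w'))"
    using w' snoc_mem_gessel_walks_to_iff[OF assms, of "butlast w'" "last w'"] calculation by auto
  ultimately show "w' \<in> (\<Union>s\<in>gessel_steps. (\<lambda>w. w @ [s]) ` gessel_walks_to h n (x - fst s) (y - snd s))"
    by blast
next
  fix w' assume "w' \<in> (\<Union>s\<in>gessel_steps. (\<lambda>w. w @ [s]) ` gessel_walks_to h n (x - fst s) (y - snd s))"
  then obtain s w where "s \<in> gessel_steps" "w \<in> gessel_walks_to h n (x - fst s) (y - snd s)" "w' = w @ [s]"
    by blast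
  then show "w' \<in> gessel_walks_to h (Suc n) x y"
    using snoc_mem_gessel_walks_to_iff[OF assms] by blast
qed

lemma card_gessel_walks_to_Suc:
  assumes "0 \<le> x" "0 \<le> y"
  shows "card (gessel_walks_to h (Suc n) x y) =
           card (gessel_walks_to h n x (y - 1)) + card (gessel_walks_to h n x (y + 1)) +
           card (gessel_walks_to h n (x - 1) (y - 1)) + card (gessel_walks_to h n (x + 1) (y + 1))"
proof -
  have "card (gessel_walks_to h (Suc n) x y) =
          (\<Sum>s\<in>gessel_steps. card ((\<lambda>w. w @ [s]) ` gessel_walks_to h n (x - fst s) (y - snd s)))"
    unfolding gessel_walks_to_Suc[OF assms]
    by (rule card_UN_disjoint) (auto simp: gessel_steps_def finite_gessel_walks_to)
  also have "\<dots> = (\<Sum>s\<in>gessel_steps. card (gessel_walks_to h n (x - fst s) (y - snd s)))"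
    by (intro sum.cong refl card_image) (auto simp: inj_on_def)
  finally show ?thesis
    by (simp add: gessel_steps_def)
qed

lemma sum_choose_shift:
  fixes f :: "nat \<Rightarrow> nat"
  shows "(\<Sum>i\<le>Suc n. (i choose x) * (if i = 0 then 0 else f (i - 1)))
           = (\<Sum>j\<le>n. (j choose x) * f j) + (if x = 0 then 0 else \<Sum>j\<le>n. (j choose (x - 1)) * f j)"
proof -
  have "(\<Sum>i\<le>Suc n. (i choose x) * (if i = 0 then 0 else f (i - 1))) = (\<Sum>j\<le>n. (Suc j choose x) * f j)"
    by (subst sum.atMost_Suc_shift) simp
  then show ?thesis
    by (cases x) (simp_all add: sum.distrib algebra_simps)
qed

lemma sum_choose_tail:
  fixes f :: "nat \<Rightarrow> nat"
  shows "(\<Sum>i\<le>Suc n. (i choose x) * (\<Sum>j\<in>{i..n}. f j))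
           = (\<Sum>j\<le>n. (j choose x) * f j) + (\<Sum>j\<le>n. (j choose Suc x) * f j)"
proof -
  have "(\<Sum>i\<le>Suc n. (i choose x) * (\<Sum>j\<in>{i..n}. f j))
          = (\<Sum>i\<le>Suc n. \<Sum>j\<in>{j. j \<in> {..n} \<and> i \<le> j}. (i choose x) * f j)"
    by (intro sum.cong refl) (auto simp: sum_distrib_left intro!: sum.cong)
  also have "\<dots> = (\<Sum>j\<le>n. \<Sum>i\<in>{i. i \<in> {..Suc n} \<and> i \<le> j}. (i choose x) * f j)"
    by (rule sum.swap_restrict) simp_all
  also have "\<dots> = (\<Sum>j\<le>n. (\<Sum>i\<le>j. i choose x) * f j)"
    by (intro sum.cong refl) (auto simp: sum_distrib_right intro!: sum.cong)
  also have "\<dots> = (\<Sum>j\<le>n. (Suc j choose Suc x) * f j)"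
    by (simp only: sum_choose_upper)
  finally show ?thesis
    by (simp add: sum.distrib algebra_simps)
qed

lemma card_gessel_walks_to_eq_sum:
  "card (gessel_walks_to h n (int x) y) = (\<Sum>j\<le>n. (j choose x) * card (ballot_213_end h n y j))"
proof (induction n arbitrary: x y)
  case 0
  then show ?case
    by (simp add: card_gessel_walks_to_0 card_ballot_213_end_0)
next
  case (Suc n)
  show ?case
  proof (cases "y < 0")
    case True
    then show ?thesis
      by (simp add: gessel_walks_to_neg ballot_213_end_neg)
  next
    case False
    let ?a = "\<lambda>y j. card (ballot_213_end h n y j)"
    have "(\<Sum>j\<le>Suc n. (j choose x) * card (ballot_213_end h (Suc n) y j))
            = (\<Sum>i\<le>Suc n. (i choose x) * (if i = 0 then 0 else ?a (y - 1) (i - 1)))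
              + (\<Sum>i\<le>Suc n. (i choose x) * (\<Sum>j\<in>{i..n}. ?a (y + 1) j))"
      using False by (simp add: card_ballot_213_end_Suc sum.distrib algebra_simps del: sum.atMost_Suc)
    also have "\<dots> = (\<Sum>j\<le>n. (j choose x) * ?a (y - 1) j)
              + (if x = 0 then 0 else \<Sum>j\<le>n. (j choose (x - 1)) * ?a (y - 1) j)
              + ((\<Sum>j\<le>n. (j choose x) * ?a (y + 1) j) + (\<Sum>j\<le>n. (j choose Suc x) * ?a (y + 1) j))"
      by (simp only: sum_choose_shift[where f = "?a (y - 1)"] sum_choose_tail)
    also have "\<dots> = card (gessel_walks_to h n (int x) (y - 1))
              + (if x = 0 then 0 else card (gessel_walks_to h n (int (x - 1)) (y - 1)))
              + (card (gessel_walks_to h n (int x) (y + 1)) + card (gessel_walks_to h n (int (Suc x)) (y + 1)))"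
      by (simp only: Suc.IH)
    also have "\<dots> = card (gessel_walks_to h (Suc n) (int x) y)"
      using False by (cases x) (simp_all add: card_gessel_walks_to_Suc gessel_walks_to_neg add_ac)
    finally show ?thesis ..
  qed
qed

theorem theorem4p2:
  fixes n h b :: nat
  shows "card (ballot_213 n h b) = card (gessel_walks n h b)"
  using card_gessel_walks_to_eq_sum[of h n 0 "int b"]
  by (simp add: card_ballot_213_eq_sum gessel_walks_eq)

end
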